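(* Let $V$ be a finite-dimensional real vector space and $P\subseteq V$ a polytope. Then in $\mathcal{P}(V)$ \[ *P = -\sum_{F\in\mathcal{F}(P)}(-1)^{\dim F}\cdot F. \]
   Context: A polytope in $V$ is the convex hull of a nonempty finite set; $\mathcal{P}(V)$ is the Grothendieck group of the monoid of polytopes in $V$ under Minkowski sum. $*P=\{-p: p\in P\}$. For $\phi\in\mathrm{Hom}(V,\mathbb{R})$, $F_\phi(P)=\{p\in P:\phi(p)=\max_{q\in P}\phi(q)\}$; a face of $P$ is a subset of the form $F_\phi(P)$ for some $\phi$ (including $\phi=0$, giving $P$ itself). $\mathcal{F}(P)$ is the set of faces of $P$, including $P$. *)

theory Defs
  imports "HOL-Analysis.Analysis"
begin

text \<open>Polytopes (nonempty, unlike the library notion): convex hulls of nonempty finite sets.\<close>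
definition ne_polytope :: "'a::euclidean_space set \<Rightarrow> bool" where
  "ne_polytope P \<longleftrightarrow> (\<exists>S. finite S \<and> S \<noteq> {} \<and> P = convex hull S)"

definition face_of_fun :: "('a::euclidean_space \<Rightarrow> real) \<Rightarrow> 'a set \<Rightarrow> 'a set" where
  "face_of_fun \<phi> P = {p \<in> P. \<forall>q\<in>P. \<phi> q \<le> \<phi> p}"

definition faces :: "'a::euclidean_space set \<Rightarrow> 'a set set" where
  "faces P = {F. \<exists>\<phi>. linear \<phi> \<and> F = face_of_fun \<phi> P}"

text \<open>Grothendieck group of the monoid of polytopes under Minkowski sum
  (Minkowski sum is the \<open>+\<close> on sets from Set_Algebras, neutral element \<open>0 = {0}\<close>).
  Elements are represented by formal differences (A,B) = [A] - [B] of polytopes;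
  addition is componentwise, negation swaps, and equality in the group is the
  Grothendieck relation \<open>groth_eq\<close>.\<close>
type_synonym 'a virt = "'a set \<times> 'a set"

definition groth_eq :: "'a::euclidean_space virt \<Rightarrow> 'a virt \<Rightarrow> bool" where
  "groth_eq x y \<longleftrightarrow> ne_polytope (fst x) \<and> ne_polytope (snd x) \<and> ne_polytope (fst y) \<and> ne_polytope (snd y)
     \<and> (\<exists>R. ne_polytope R \<and> fst x + snd y + R = fst y + snd x + R)"

definition pcls :: "'a::euclidean_space set \<Rightarrow> 'a virt" where
  "pcls P = (P, 0)"

definition gneg :: "'a::euclidean_space virt \<Rightarrow> 'a virt" where
  "gneg x = (snd x, fst x)"

definition zmul :: "int \<Rightarrow> 'a::euclidean_space virt \<Rightarrow> 'a virt" where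
  "zmul k x = (if 0 \<le> k then (\<Sum>i<nat k. x) else (\<Sum>i<nat (- k). gneg x))"

definition refl_poly :: "'a::euclidean_space set \<Rightarrow> 'a set" where
  "refl_poly P = uminus ` P"

end

theory Submission
  imports Defs
begin

text \<open>
  Polytopes are determined by their support functions \<open>h\<^sub>Q(a) = max\<^sub>x\<^sub>\<in>\<^sub>Q a\<bullet>x\<close>, which are
  additive under Minkowski sum, and \<open>h\<^sub>*\<^sub>P(a) = -min\<^sub>x\<^sub>\<in>\<^sub>P a\<bullet>x\<close>. So it suffices to show
  \<open>\<Sum>\<^sub>F (-1)\<^sup>d\<^sup>i\<^sup>m\<^sup>F h\<^sub>F(a) = min\<^sub>x\<^sub>\<in>\<^sub>P a\<bullet>x\<close> for every \<open>a\<close>. Perturb \<open>a\<close> to a direction \<open>b\<close> that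
  separates the vertices and refines the order given by \<open>a\<close>; then \<open>h\<^sub>F(a) = a\<bullet>top\<^sub>b(F)\<close> for the
  \<open>b\<close>-highest vertex of \<open>F\<close>. Grouping the faces by their top vertex, the claim follows from
  the local Euler relation: the faces with top vertex \<open>v\<close> have signed count \<open>1\<close> if \<open>v\<close> is
  the \<open>b\<close>-lowest vertex of \<open>P\<close> and \<open>0\<close> otherwise. For a hyperplane \<open>H\<close> cutting off \<open>v\<close>, the
  map \<open>F \<mapsto> F \<inter> H\<close> matches these faces, except \<open>{v}\<close>, with the faces of the vertex figure
  \<open>P \<inter> H\<close> lying strictly \<open>b\<close>-below \<open>v\<close>, lowering dimensions by one. By induction on the
  dimension the latter have signed count \<open>1\<close> whenever there are any, since the faces of a
  polytope inside an open halfspace meeting it always have signed count \<open>1\<close>; this halfspace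
  relation in turn follows from the local relation by the same grouping.
\<close>

definition vertices :: "'a::real_vector set \<Rightarrow> 'a set" where
  "vertices P = {x. x extreme_point_of P}"

definition nonempty_faces :: "'a::real_vector set \<Rightarrow> 'a set set" where
  "nonempty_faces P = {F. F face_of P \<and> F \<noteq> {}}"

definition face_sign :: "'a::euclidean_space set \<Rightarrow> int" where
  "face_sign F = (-1) ^ nat (aff_dim F)"

definition euler_below :: "'a::euclidean_space set \<Rightarrow> 'a \<Rightarrow> real \<Rightarrow> int" where
  "euler_below P a t = (\<Sum>F\<in>{F\<in>nonempty_faces P. F \<subseteq> {x. a \<bullet> x < t}}. face_sign F)"

definition support_fun :: "'a::real_inner set \<Rightarrow> 'a \<Rightarrow> real" where
  "support_fun A a = Sup ((\<lambda>x. a \<bullet> x) ` A)"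

lemma finite_ex_max:
  fixes f :: "'b \<Rightarrow> real"
  assumes "finite A" "A \<noteq> {}"
  shows "\<exists>x\<in>A. \<forall>y\<in>A. f y \<le> f x"
proof -
  obtain x where "x \<in> A" "Max (f ` A) = f x"
    using obtains_MAX[OF assms] by metis
  then show ?thesis
    using assms by (metis Max_ge finite_imageI image_eqI)
qed

lemma face_sign_eq: "face_sign F = (if even (nat (aff_dim F)) then 1 else -1)"
  by (simp add: face_sign_def)

lemma face_sign_singleton [simp]: "face_sign {v} = 1"
  by (simp add: face_sign_def)


section \<open>Vertices and faces of polytopes\<close>

lemma vertices_subset: "vertices P \<subseteq> P"
  by (auto simp: vertices_def extreme_point_of_def)

lemma vertices_face_of: "F face_of P \<Longrightarrow> vertices F = vertices P \<inter> F"
  by (auto simp: vertices_def extreme_point_of_face)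

lemma
  fixes P :: "'a::euclidean_space set"
  assumes "polytope P"
  shows finite_vertices: "finite (vertices P)"
    and convex_hull_vertices: "convex hull (vertices P) = P"
proof -
  obtain S where S: "finite S" "P = convex hull S"
    using assms polytope_def by blast
  then have "vertices P \<subseteq> S"
    using extreme_point_of_convex_hull by (auto simp: vertices_def)
  then show "finite (vertices P)"
    using S finite_subset by blast
  show "convex hull (vertices P) = P"
    using Krein_Milman_polytope[OF S(1)] S(2) by (simp add: vertices_def)
qed

lemma polytope_le_iff_vertices:
  fixes P :: "'a::euclidean_space set"
  assumes "polytope P"
  shows "(\<forall>y\<in>P. a \<bullet> y \<le> c) \<longleftrightarrow> (\<forall>v\<in>vertices P. a \<bullet> v \<le> c)"
proof
  assume "\<forall>v\<in>vertices P. a \<bullet> v \<le> c"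
  then have "convex hull (vertices P) \<subseteq> {x. a \<bullet> x \<le> c}"
    by (intro hull_minimal) (auto simp: convex_halfspace_le)
  then show "\<forall>y\<in>P. a \<bullet> y \<le> c"
    using convex_hull_vertices[OF assms] by auto
qed (use vertices_subset in blast)

lemma polytope_lt_iff_vertices:
  fixes P :: "'a::euclidean_space set"
  assumes "polytope P"
  shows "(\<forall>y\<in>P. a \<bullet> y < c) \<longleftrightarrow> (\<forall>v\<in>vertices P. a \<bullet> v < c)"
proof
  assume "\<forall>v\<in>vertices P. a \<bullet> v < c"
  then have "convex hull (vertices P) \<subseteq> {x. a \<bullet> x < c}"
    by (intro hull_minimal) (auto simp: convex_halfspace_lt)
  then show "\<forall>y\<in>P. a \<bullet> y < c"
    using convex_hull_vertices[OF assms] by auto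
qed (use vertices_subset in blast)

lemma polytope_subset_halfspace_iff:
  fixes F :: "'a::euclidean_space set"
  assumes "polytope F" and "\<And>v. v \<in> vertices F \<Longrightarrow> a \<bullet> v < t \<longleftrightarrow> b \<bullet> v < s"
  shows "F \<subseteq> {x. a \<bullet> x < t} \<longleftrightarrow> F \<subseteq> {x. b \<bullet> x < s}"
proof -
  have "F \<subseteq> {x. a \<bullet> x < t} \<longleftrightarrow> (\<forall>v\<in>vertices F. a \<bullet> v < t)"
    using polytope_lt_iff_vertices[OF assms(1), of a t] by blast
  also have "\<dots> \<longleftrightarrow> (\<forall>v\<in>vertices F. b \<bullet> v < s)"
    using assms(2) by blast
  also have "\<dots> \<longleftrightarrow> F \<subseteq> {x. b \<bullet> x < s}"
    using polytope_lt_iff_vertices[OF assms(1), of b s] by blast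
  finally show ?thesis .
qed

lemma polytope_ex_vertex_below:
  fixes P :: "'a::euclidean_space set"
  assumes "polytope P" "\<exists>x\<in>P. a \<bullet> x < t"
  obtains v where "v \<in> vertices P" "a \<bullet> v < t"
proof -
  have "\<not> (\<forall>y\<in>P. (-a) \<bullet> y \<le> - t)"
    using assms(2) by (auto simp: not_le)
  then obtain v where "v \<in> vertices P" "\<not> (-a) \<bullet> v \<le> - t"
    using polytope_le_iff_vertices[OF assms(1), of "-a" "-t"] by blast
  then show thesis
    using that by (simp add: not_le)
qed

lemma polytope_max_at_vertex:
  fixes P :: "'a::euclidean_space set"
  assumes "polytope P" "P \<noteq> {}"
  obtains v where "v \<in> vertices P" "\<forall>y\<in>P. a \<bullet> y \<le> a \<bullet> v"
proof -
  have "vertices P \<noteq> {}"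
    using convex_hull_vertices[OF assms(1)] assms(2) by auto
  then obtain v where "v \<in> vertices P" "\<forall>y\<in>vertices P. a \<bullet> y \<le> a \<bullet> v"
    using finite_ex_max[OF finite_vertices[OF assms(1)]] by blast
  then show thesis
    using that polytope_le_iff_vertices[OF assms(1)] by blast
qed

lemma finite_nonempty_faces:
  fixes P :: "'a::euclidean_space set"
  assumes "polytope P"
  shows "finite (nonempty_faces P)"
  using finite_polytope_faces[OF assms]
  by (rule finite_subset[rotated]) (auto simp: nonempty_faces_def)

lemma polytope_nonempty_face:
  fixes P :: "'a::euclidean_space set"
  shows "polytope P \<Longrightarrow> F \<in> nonempty_faces P \<Longrightarrow> polytope F"
  by (auto simp: nonempty_faces_def face_of_polytope_polytope)

lemma face_of_fun_nonempty_face: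
  fixes P :: "'a::euclidean_space set"
  assumes P: "polytope P" "P \<noteq> {}" and \<phi>: "linear \<phi>"
  shows "face_of_fun \<phi> P \<in> nonempty_faces P"
proof -
  define a where "a = adjoint \<phi> 1"
  have a: "\<phi> x = a \<bullet> x" for x
    using adjoint_clauses(2)[OF \<phi>, of 1 x] by (simp add: a_def)
  obtain v where v: "v \<in> vertices P" "\<forall>y\<in>P. a \<bullet> y \<le> a \<bullet> v"
    using polytope_max_at_vertex[OF P] by blast
  have "v \<in> P"
    using v(1) vertices_subset by blast
  then have "face_of_fun \<phi> P = P \<inter> {x. a \<bullet> x = a \<bullet> v}"
    using v(2) by (auto simp: face_of_fun_def a intro: order.antisym)
  moreover have "P \<inter> {x. a \<bullet> x = a \<bullet> v} face_of P"
    using v(2) by (intro face_of_Int_supporting_hyperplane_le polytope_imp_convex[OF P(1)]) auto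
  ultimately show ?thesis
    using \<open>v \<in> P\<close> by (auto simp: nonempty_faces_def)
qed

lemma nonempty_face_eq_face_of_fun:
  fixes P :: "'a::euclidean_space set"
  assumes P: "polytope P" and F: "F \<in> nonempty_faces P"
  obtains a where "F = face_of_fun (\<lambda>x. a \<bullet> x) P"
proof -
  have "F exposed_face_of P"
    using exposed_face_of_polyhedron[OF polytope_imp_polyhedron[OF P]] F
    by (simp add: nonempty_faces_def)
  then obtain a e where ae: "P \<subseteq> {x. a \<bullet> x \<le> e}" "F = P \<inter> {x. a \<bullet> x = e}"
    unfolding exposed_face_of_def by blast
  obtain p where "p \<in> F"
    using F by (auto simp: nonempty_faces_def)
  then have "F = face_of_fun (\<lambda>x. a \<bullet> x) P"
    using ae by (auto simp: face_of_fun_def intro: order.antisym)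
  then show thesis
    using that by blast
qed

lemma faces_eq_nonempty_faces:
  fixes P :: "'a::euclidean_space set"
  assumes "polytope P" "P \<noteq> {}"
  shows "faces P = nonempty_faces P"
proof
  show "faces P \<subseteq> nonempty_faces P"
    using face_of_fun_nonempty_face[OF assms] by (auto simp: faces_def)
  show "nonempty_faces P \<subseteq> faces P"
  proof
    fix F assume "F \<in> nonempty_faces P"
    then obtain a where "F = face_of_fun (\<lambda>x. a \<bullet> x) P"
      by (rule nonempty_face_eq_face_of_fun[OF assms(1)])
    then show "F \<in> faces P"
      unfolding faces_def using bounded_linear.linear[OF bounded_linear_inner_right] by blast
  qed
qed


section \<open>Generic directions\<close>

lemma exists_separating_direction:
  fixes V :: "'a::euclidean_space set"
  assumes "finite V"
  obtains w where "\<And>x y. x \<in> V \<Longrightarrow> y \<in> V \<Longrightarrow> x \<noteq> y \<Longrightarrow> w \<bullet> x \<noteq> w \<bullet> y"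
proof -
  define N where "N = (\<Union>(x, y)\<in>{(x, y) \<in> V \<times> V. x \<noteq> y}. {w. (x - y) \<bullet> w = 0})"
  have "finite {(x, y) \<in> V \<times> V. x \<noteq> y}"
    using assms by (auto intro: finite_subset[of _ "V \<times> V"])
  then have "negligible N"
    unfolding N_def by (intro negligible_Union) (auto intro: negligible_hyperplane)
  then obtain w where "w \<notin> N"
    by (metis UNIV_eq_I non_negligible_UNIV)
  then show thesis
    by (intro that) (auto simp: N_def inner_diff_left inner_commute[of _ w])
qed

lemma eventually_perturbation_refines:
  fixes a w :: "'a::real_inner"
  assumes "finite V"
  shows "\<forall>\<^sub>F \<epsilon> in at_right 0. \<forall>x\<in>V. \<forall>y\<in>V.
           a \<bullet> x < a \<bullet> y \<longrightarrow> (a + \<epsilon> *\<^sub>R w) \<bullet> x < (a + \<epsilon> *\<^sub>R w) \<bullet> y"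
proof (intro eventually_ball_finite ballI assms)
  fix x y
  have "((\<lambda>\<epsilon>. (a \<bullet> y - a \<bullet> x) + \<epsilon> * (w \<bullet> y - w \<bullet> x))
      \<longlongrightarrow> (a \<bullet> y - a \<bullet> x) + 0 * (w \<bullet> y - w \<bullet> x)) (at_right 0)"
    by (intro tendsto_intros)
  then have "\<forall>\<^sub>F \<epsilon> in at_right 0. a \<bullet> x < a \<bullet> y \<longrightarrow> 0 < (a \<bullet> y - a \<bullet> x) + \<epsilon> * (w \<bullet> y - w \<bullet> x)"
    by (cases "a \<bullet> x < a \<bullet> y") (auto dest: order_tendstoD(1)[where a = 0])
  then show "\<forall>\<^sub>F \<epsilon> in at_right 0. a \<bullet> x < a \<bullet> y \<longrightarrow> (a + \<epsilon> *\<^sub>R w) \<bullet> x < (a + \<epsilon> *\<^sub>R w) \<bullet> y"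
    by (rule eventually_mono) (simp add: inner_add_left algebra_simps)
qed

lemma eventually_perturbation_close:
  fixes a w :: "'a::real_inner"
  assumes "finite V" "\<delta> > 0"
  shows "\<forall>\<^sub>F \<epsilon> in at_right 0. \<forall>x\<in>V. \<bar>(a + \<epsilon> *\<^sub>R w) \<bullet> x - a \<bullet> x\<bar> < \<delta>"
proof (intro eventually_ball_finite ballI assms(1))
  fix x
  have "((\<lambda>\<epsilon>. \<bar>\<epsilon> * (w \<bullet> x)\<bar>) \<longlongrightarrow> \<bar>0 * (w \<bullet> x)\<bar>) (at_right 0)"
    by (intro tendsto_intros)
  then have "\<forall>\<^sub>F \<epsilon> in at_right 0. \<bar>\<epsilon> * (w \<bullet> x)\<bar> < \<delta>"
    using assms(2) by (auto dest: order_tendstoD(2))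
  then show "\<forall>\<^sub>F \<epsilon> in at_right 0. \<bar>(a + \<epsilon> *\<^sub>R w) \<bullet> x - a \<bullet> x\<bar> < \<delta>"
    by (simp add: inner_add_left)
qed

text \<open>The direction is \<open>a + \<epsilon> w\<close> for a small \<open>\<epsilon> > 0\<close> and a \<open>w\<close> separating the points of \<open>V\<close>.\<close>

lemma generic_direction:
  fixes V :: "'a::euclidean_space set"
  assumes "finite V" "\<delta> > 0"
  obtains b where "inj_on (\<lambda>x. b \<bullet> x) V"
    and "\<And>x y. x \<in> V \<Longrightarrow> y \<in> V \<Longrightarrow> a \<bullet> x < a \<bullet> y \<Longrightarrow> b \<bullet> x < b \<bullet> y"
    and "\<And>x. x \<in> V \<Longrightarrow> \<bar>b \<bullet> x - a \<bullet> x\<bar> < \<delta>"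
proof -
  obtain w where w: "\<And>x y. x \<in> V \<Longrightarrow> y \<in> V \<Longrightarrow> x \<noteq> y \<Longrightarrow> w \<bullet> x \<noteq> w \<bullet> y"
    using exists_separating_direction[OF assms(1)] by blast
  have "\<forall>\<^sub>F \<epsilon> in at_right 0. 0 < \<epsilon> \<and>
      (\<forall>x\<in>V. \<forall>y\<in>V. a \<bullet> x < a \<bullet> y \<longrightarrow> (a + \<epsilon> *\<^sub>R w) \<bullet> x < (a + \<epsilon> *\<^sub>R w) \<bullet> y) \<and>
      (\<forall>x\<in>V. \<bar>(a + \<epsilon> *\<^sub>R w) \<bullet> x - a \<bullet> x\<bar> < \<delta>)"
    using eventually_at_right_less eventually_perturbation_refines[OF assms(1)]
      eventually_perturbation_close[OF assms]
    by (intro eventually_conj)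
  then obtain \<epsilon> where \<epsilon>: "0 < \<epsilon>"
    "\<forall>x\<in>V. \<forall>y\<in>V. a \<bullet> x < a \<bullet> y \<longrightarrow> (a + \<epsilon> *\<^sub>R w) \<bullet> x < (a + \<epsilon> *\<^sub>R w) \<bullet> y"
    "\<forall>x\<in>V. \<bar>(a + \<epsilon> *\<^sub>R w) \<bullet> x - a \<bullet> x\<bar> < \<delta>"
    using eventually_happens'[OF trivial_limit_at_right_real] by blast
  have "inj_on (\<lambda>x. (a + \<epsilon> *\<^sub>R w) \<bullet> x) V"
  proof (rule inj_onI, rule ccontr)
    fix x y assume xy: "x \<in> V" "y \<in> V" "(a + \<epsilon> *\<^sub>R w) \<bullet> x = (a + \<epsilon> *\<^sub>R w) \<bullet> y" "x \<noteq> y"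
    then have "a \<bullet> x = a \<bullet> y"
      using \<epsilon>(2) by (metis less_irrefl linorder_neqE_linordered_idom)
    then show False
      using xy(3) w[OF xy(1,2,4)] \<epsilon>(1) by (simp add: inner_add_left)
  qed
  then show thesis
    using that \<epsilon> by blast
qed


lemma generic_direction_halfspace:
  fixes V :: "'a::euclidean_space set"
  assumes "finite V"
  obtains b t' where "inj_on (\<lambda>x. b \<bullet> x) V" "\<And>x. x \<in> V \<Longrightarrow> a \<bullet> x < t \<longleftrightarrow> b \<bullet> x < t'"
proof -
  obtain \<delta> where \<delta>: "\<delta> > 0" "\<And>x. x \<in> V \<Longrightarrow> a \<bullet> x < t \<Longrightarrow> a \<bullet> x + 2 * \<delta> \<le> t"
  proof (cases "\<exists>x\<in>V. a \<bullet> x < t")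
    case True
    then obtain x0 where x0: "x0 \<in> V" "a \<bullet> x0 < t"
      and max: "\<And>x. x \<in> V \<Longrightarrow> a \<bullet> x < t \<Longrightarrow> a \<bullet> x \<le> a \<bullet> x0"
      using finite_ex_max[of "{x\<in>V. a \<bullet> x < t}" "\<lambda>x. a \<bullet> x"] assms by auto
    show thesis
    proof (rule that)
      show "(t - a \<bullet> x0) / 2 > 0"
        using x0(2) by simp
      show "a \<bullet> x + 2 * ((t - a \<bullet> x0) / 2) \<le> t" if "x \<in> V" "a \<bullet> x < t" for x
        using max[OF that] by (simp add: field_simps)
    qed
  qed (use that[of 1] in auto)
  obtain b where inj: "inj_on (\<lambda>x. b \<bullet> x) V"
    and close: "\<And>x. x \<in> V \<Longrightarrow> \<bar>b \<bullet> x - a \<bullet> x\<bar> < \<delta>"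
    using generic_direction[OF assms \<delta>(1)] by metis
  have "a \<bullet> x < t \<longleftrightarrow> b \<bullet> x < t - \<delta>" if "x \<in> V" for x
    using \<delta>(2)[OF that] close[OF that] by (auto simp: abs_less_iff)
  then show thesis
    using that inj by blast
qed


section \<open>The top vertex of a face\<close>

definition top_vertex :: "'a::euclidean_space \<Rightarrow> 'a set \<Rightarrow> 'a" where
  "top_vertex b F = (SOME v. v \<in> vertices F \<and> (\<forall>y\<in>F. b \<bullet> y \<le> b \<bullet> v))"

lemma top_vertex:
  assumes "polytope F" "F \<noteq> {}"
  shows "top_vertex b F \<in> vertices F" "\<forall>y\<in>F. b \<bullet> y \<le> b \<bullet> top_vertex b F"
proof -
  have "top_vertex b F \<in> vertices F \<and> (\<forall>y\<in>F. b \<bullet> y \<le> b \<bullet> top_vertex b F)"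
    unfolding top_vertex_def by (rule someI_ex) (metis polytope_max_at_vertex[OF assms])
  then show "top_vertex b F \<in> vertices F" "\<forall>y\<in>F. b \<bullet> y \<le> b \<bullet> top_vertex b F"
    by auto
qed

lemma subset_halfspace_iff_top_vertex:
  assumes "polytope F" "F \<noteq> {}"
  shows "F \<subseteq> {x. b \<bullet> x < t} \<longleftrightarrow> b \<bullet> top_vertex b F < t"
proof -
  note top = top_vertex[OF assms, of b]
  have "top_vertex b F \<in> F"
    using top(1) vertices_subset by blast
  then show ?thesis
    using top(2) by fastforce
qed

lemma top_vertex_in_vertices:
  assumes "polytope P" "F \<in> nonempty_faces P"
  shows "top_vertex b F \<in> vertices P"
proof -
  have "F face_of P" "F \<noteq> {}"
    using assms(2) by (auto simp: nonempty_faces_def)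
  then show ?thesis
    using top_vertex(1)[OF polytope_nonempty_face[OF assms], of b] vertices_face_of by blast
qed

lemma top_vertex_eq_iff:
  assumes P: "polytope P" and inj: "inj_on (\<lambda>x. b \<bullet> x) (vertices P)"
    and F: "F \<in> nonempty_faces P" and v: "v \<in> vertices P"
  shows "top_vertex b F = v \<longleftrightarrow> v \<in> F \<and> (\<forall>y\<in>F. b \<bullet> y \<le> b \<bullet> v)"
proof -
  have fF: "F face_of P" "F \<noteq> {}"
    using F by (auto simp: nonempty_faces_def)
  note top = top_vertex[OF polytope_nonempty_face[OF P F] fF(2), of b]
  have tP: "top_vertex b F \<in> vertices P" "top_vertex b F \<in> F"
    using top(1) vertices_face_of[OF fF(1)] by auto
  show ?thesis
  proof
    assume "v \<in> F \<and> (\<forall>y\<in>F. b \<bullet> y \<le> b \<bullet> v)"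
    then have "b \<bullet> top_vertex b F = b \<bullet> v"
      using top(2) tP by (meson order.antisym)
    then show "top_vertex b F = v"
      using inj tP(1) v by (auto simp: inj_on_def)
  qed (use tP top in auto)
qed

lemma support_fun_eq_max:
  assumes "x \<in> A" "\<forall>y\<in>A. a \<bullet> y \<le> a \<bullet> x"
  shows "support_fun A a = a \<bullet> x"
  unfolding support_fun_def using assms by (intro cSup_eq_maximum) auto

lemma support_fun_top_vertex:
  assumes "polytope F" "F \<noteq> {}"
    and "\<And>x y. x \<in> vertices F \<Longrightarrow> y \<in> vertices F \<Longrightarrow> a \<bullet> x < a \<bullet> y \<Longrightarrow> b \<bullet> x < b \<bullet> y"
  shows "support_fun F a = a \<bullet> top_vertex b F"
proof (rule support_fun_eq_max)
  note top = top_vertex[OF assms(1,2), of b]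
  show "top_vertex b F \<in> F"
    using top(1) vertices_subset by blast
  have "a \<bullet> y \<le> a \<bullet> top_vertex b F" if "y \<in> vertices F" for y
  proof -
    have "y \<in> F"
      using that vertices_subset by blast
    then show ?thesis
      using assms(3)[OF top(1) that] top(2) by force
  qed
  then show "\<forall>y\<in>F. a \<bullet> y \<le> a \<bullet> top_vertex b F"
    using polytope_le_iff_vertices[OF assms(1)] by blast
qed

lemma top_level_set_singleton:
  fixes F :: "'a::euclidean_space set"
  assumes "polytope F" "inj_on (\<lambda>x. b \<bullet> x) (vertices F)" "v \<in> vertices F"
    and "\<forall>y\<in>F. b \<bullet> y \<le> b \<bullet> v"
  shows "F \<inter> {x. b \<bullet> x = b \<bullet> v} = {v}"
proof -
  let ?G = "F \<inter> {x. b \<bullet> x = b \<bullet> v}"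
  have G: "?G face_of F"
    using assms by (intro face_of_Int_supporting_hyperplane_le) (auto simp: polytope_imp_convex)
  have "vertices ?G = vertices F \<inter> ?G"
    using vertices_face_of[OF G] .
  also have "\<dots> = {v}"
    using assms(2,3) vertices_subset[of F] by (auto simp: inj_on_def)
  finally have "vertices ?G = {v}" .
  then show ?thesis
    using convex_hull_vertices[OF face_of_polytope_polytope[OF assms(1) G]] by simp
qed

text \<open>\<open>top_vertex (-b) P\<close> is the \<open>b\<close>-lowest vertex of \<open>P\<close>; the hypothesis is the local Euler
  relation at every vertex.\<close>

lemma sum_faces_by_top_vertex:
  fixes P :: "'a::euclidean_space set" and g :: "'a \<Rightarrow> 'r::comm_ring_1"
  assumes P: "polytope P" "P \<noteq> {}" and inj: "inj_on (\<lambda>x. b \<bullet> x) (vertices P)"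
    and local_euler: "\<And>v. v \<in> vertices P \<Longrightarrow>
      (\<Sum>F\<in>{F\<in>nonempty_faces P. top_vertex b F = v}. face_sign F)
        = (if \<forall>y\<in>P. b \<bullet> v \<le> b \<bullet> y then 1 else 0)"
  shows "(\<Sum>F\<in>nonempty_faces P. of_int (face_sign F) * g (top_vertex b F))
           = g (top_vertex (-b) P)"
proof -
  define v0 where "v0 = top_vertex (-b) P"
  have "inj_on (\<lambda>x. (-b) \<bullet> x) (vertices P)" "P \<in> nonempty_faces P"
    using inj P by (auto simp: inj_on_def nonempty_faces_def face_of_refl polytope_imp_convex)
  then have lowest: "(\<forall>y\<in>P. b \<bullet> v \<le> b \<bullet> y) \<longleftrightarrow> v = v0" if "v \<in> vertices P" for v
    using top_vertex_eq_iff[OF P(1)] that vertices_subset by (fastforce simp: v0_def)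
  have v0: "v0 \<in> vertices P"
    using top_vertex_in_vertices[OF P(1) \<open>P \<in> nonempty_faces P\<close>] by (simp add: v0_def)
  have "(\<Sum>F\<in>nonempty_faces P. of_int (face_sign F) * g (top_vertex b F))
      = (\<Sum>v\<in>vertices P. \<Sum>F\<in>{F\<in>nonempty_faces P. top_vertex b F = v}.
            of_int (face_sign F) * g (top_vertex b F))"
    using top_vertex_in_vertices[OF P(1)]
    by (intro sum.group[symmetric] finite_nonempty_faces finite_vertices P(1)) auto
  also have "\<dots> = (\<Sum>v\<in>vertices P. of_int (if \<forall>y\<in>P. b \<bullet> v \<le> b \<bullet> y then 1 else 0) * g v)"
  proof (rule sum.cong[OF refl])
    fix v assume v: "v \<in> vertices P"
    have "(\<Sum>F\<in>{F\<in>nonempty_faces P. top_vertex b F = v}. of_int (face_sign F) * g (top_vertex b F))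
        = of_int (\<Sum>F\<in>{F\<in>nonempty_faces P. top_vertex b F = v}. face_sign F) * g v"
      by (simp add: sum_distrib_right)
    then show "(\<Sum>F\<in>{F\<in>nonempty_faces P. top_vertex b F = v}. of_int (face_sign F) * g (top_vertex b F))
        = of_int (if \<forall>y\<in>P. b \<bullet> v \<le> b \<bullet> y then 1 else 0) * g v"
      using local_euler[OF v] by simp
  qed
  also have "\<dots> = (\<Sum>v\<in>vertices P. if v = v0 then g v else 0)"
    using lowest by (intro sum.cong) auto
  also have "\<dots> = g v0"
    using finite_vertices[OF P(1)] v0 by simp
  finally show ?thesis
    by (simp add: v0_def)
qed


section \<open>Vertex figures\<close>

lemma open_segment_meets_hyperplane:
  fixes x z :: "'a::real_inner"
  assumes "(c \<bullet> x - l) * (c \<bullet> z - l) < 0"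
  shows "\<exists>p\<in>open_segment x z. c \<bullet> p = l"
proof -
  define u where "u = (c \<bullet> x - l) / (c \<bullet> x - c \<bullet> z)"
  have ne: "c \<bullet> x - c \<bullet> z \<noteq> 0" "x \<noteq> z"
    using assms by auto
  have "c \<bullet> ((1 - u) *\<^sub>R x + u *\<^sub>R z) = c \<bullet> x - u * (c \<bullet> x - c \<bullet> z)"
    by (simp add: inner_add_right algebra_simps)
  also have "\<dots> = l"
    using ne by (simp add: u_def)
  finally have "c \<bullet> ((1 - u) *\<^sub>R x + u *\<^sub>R z) = l" .
  moreover have "0 < u \<and> u < 1"
  proof (cases "c \<bullet> x - l > 0")
    case True
    then have "c \<bullet> z - l < 0"
      using assms by (simp add: mult_less_0_iff)
    then show ?thesis
      using True by (auto simp: u_def field_simps)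
  next
    case False
    then have "c \<bullet> x - l < 0" "c \<bullet> z - l > 0"
      using assms by (auto simp: mult_less_0_iff)
    then show ?thesis
      by (auto simp: u_def field_simps)
  qed
  ultimately show ?thesis
    using ne(2) in_segment(2) by blast
qed

lemma inner_open_segment:
  fixes g :: "'a::real_inner"
  assumes "p \<in> open_segment v y"
  shows "g \<bullet> p \<le> g \<bullet> v \<longleftrightarrow> g \<bullet> y \<le> g \<bullet> v" "g \<bullet> p < g \<bullet> v \<longleftrightarrow> g \<bullet> y < g \<bullet> v"
proof -
  obtain u where u: "0 < u" "p = (1 - u) *\<^sub>R v + u *\<^sub>R y"
    using assms in_segment(2) by blast
  have eq: "g \<bullet> p - g \<bullet> v = u * (g \<bullet> y - g \<bullet> v)"
    unfolding u(2) by (simp add: inner_add_right algebra_simps)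
  have "g \<bullet> p \<le> g \<bullet> v \<longleftrightarrow> u * (g \<bullet> y - g \<bullet> v) \<le> 0"
    using eq by linarith
  then show "g \<bullet> p \<le> g \<bullet> v \<longleftrightarrow> g \<bullet> y \<le> g \<bullet> v"
    using u(1) by (simp add: mult_le_0_iff)
  have "g \<bullet> p < g \<bullet> v \<longleftrightarrow> u * (g \<bullet> y - g \<bullet> v) < 0"
    using eq by linarith
  then show "g \<bullet> p < g \<bullet> v \<longleftrightarrow> g \<bullet> y < g \<bullet> v"
    using u(1) by (simp add: mult_less_0_iff)
qed

locale vertex_figure =
  fixes P :: "'a::euclidean_space set" and v c :: 'a and l :: real
  assumes polytope_P: "polytope P" and vertex: "v \<in> vertices P"
    and vertices_below: "\<And>y. y \<in> vertices P \<Longrightarrow> y \<noteq> v \<Longrightarrow> c \<bullet> y < l"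
    and vertex_above: "l < c \<bullet> v"
begin

abbreviation H where "H \<equiv> {x. c \<bullet> x = l}"

lemma vertex_in: "v \<in> P"
  using vertex vertices_subset by blast

lemma convex_P: "convex P"
  using polytope_P polytope_imp_convex by blast

lemma open_segment_meets_H:
  assumes "y \<in> vertices P" "y \<noteq> v"
  shows "\<exists>p\<in>open_segment v y. p \<in> H"
  using open_segment_meets_hyperplane[of c v l y] vertices_below[OF assms] vertex_above
  by (simp add: mult_pos_neg)

lemma other_vertex:
  assumes "F face_of P" "v \<in> F" "F \<noteq> {v}"
  obtains y where "y \<in> vertices F" "y \<noteq> v"
proof -
  have "vertices F \<noteq> {v}"
    using convex_hull_vertices[OF face_of_polytope_polytope[OF polytope_P assms(1)]] assms(3)
    by auto
  moreover have "v \<in> vertices F"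
    using vertices_face_of[OF assms(1)] vertex assms(2) by simp
  ultimately show thesis
    using that by blast
qed

lemma rel_interior_face_meets_H:
  assumes "F face_of P" "v \<in> F" "F \<noteq> {v}"
  shows "rel_interior F \<inter> H \<noteq> {}"
proof -
  have cF: "convex F"
    using face_of_imp_convex[OF assms(1)] .
  obtain x where x: "x \<in> rel_interior F"
    using rel_interior_eq_empty[OF cF] assms(2) by blast
  obtain y where y: "y \<in> vertices F" "y \<noteq> v"
    using other_vertex[OF assms] .
  have yF: "y \<in> F" and cy: "c \<bullet> y < l"
    using y vertices_subset vertices_below vertices_face_of[OF assms(1)] by auto
  have crossing: "rel_interior F \<inter> H \<noteq> {}"
    if "z \<in> F" "(c \<bullet> x - l) * (c \<bullet> z - l) < 0" for z
  proof -
    have "open_segment x z \<subseteq> rel_interior F"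
      using rel_interior_closure_convex_segment[OF cF x] that(1) closure_subset by blast
    then show ?thesis
      using open_segment_meets_hyperplane[OF that(2)] by blast
  qed
  consider "c \<bullet> x = l" | "c \<bullet> x < l" | "c \<bullet> x > l"
    by linarith
  then show ?thesis
  proof cases
    case 1
    then show ?thesis using x by blast
  next
    case 2
    then show ?thesis using crossing[OF assms(2)] vertex_above by (simp add: mult_neg_pos)
  next
    case 3
    then show ?thesis using crossing[OF yF] cy by (simp add: mult_pos_neg)
  qed
qed

lemma face_meets_H:
  assumes "F face_of P" "v \<in> F" "F \<noteq> {v}"
  shows "F \<inter> H \<noteq> {}"
  using rel_interior_face_meets_H[OF assms] rel_interior_subset by blast

lemma aff_dim_face_Int_H:
  assumes "F face_of P" "v \<in> F" "F \<noteq> {v}"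
  shows "aff_dim (F \<inter> H) = aff_dim F - 1"
proof -
  obtain x where x: "x \<in> rel_interior F" "x \<in> H"
    using rel_interior_face_meets_H[OF assms] by blast
  obtain e where e: "e > 0" "ball x e \<inter> affine hull F \<subseteq> F"
    using x(1) mem_rel_interior_ball by blast
  define S where "S = affine hull F \<inter> H"
  have xS: "x \<in> S"
    using x rel_interior_subset hull_subset[of F affine] by (auto simp: S_def)
  have "aff_dim (S \<inter> ball x e) = aff_dim S"
    using xS e(1) by (intro aff_dim_convex_Int_open)
      (auto simp: S_def intro!: convex_Int convex_affine_hull convex_hyperplane)
  moreover have "S \<inter> ball x e \<subseteq> F \<inter> H" "F \<inter> H \<subseteq> S"
    using e hull_subset[of F affine] by (auto simp: S_def)
  ultimately have "aff_dim (F \<inter> H) = aff_dim S"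
    using aff_dim_subset by (metis order.antisym)
  moreover have "v \<in> affine hull F"
    using assms(2) hull_subset[of F affine] by blast
  then have "aff_dim S = aff_dim (affine hull F) - 1"
    using aff_dim_affine_Int_hyperplane[OF affine_affine_hull[of F], of c l] xS vertex_above
    by (auto simp: S_def split: if_splits)
  ultimately show ?thesis
    by simp
qed

lemma face_sign_Int_H:
  assumes "F face_of P" "v \<in> F" "F \<noteq> {v}"
  shows "face_sign (F \<inter> H) = - face_sign F"
proof -
  have "aff_dim (F \<inter> H) \<ge> 0"
    using face_meets_H[OF assms] aff_dim_negative_iff[of "F \<inter> H"] by linarith
  then have "nat (aff_dim F) = Suc (nat (aff_dim (F \<inter> H)))"
    using aff_dim_face_Int_H[OF assms] by linarith
  then show ?thesis
    by (simp add: face_sign_def)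
qed

lemma polytope_slice: "polytope (P \<inter> H)"
  using polytope_P by (simp add: polytope_Int_polyhedron polyhedron_hyperplane)

lemma aff_dim_slice_less:
  assumes "P \<noteq> {v}"
  shows "aff_dim (P \<inter> H) < aff_dim P"
  using aff_dim_face_Int_H[OF face_of_refl[OF convex_P] vertex_in assms] by simp

lemma face_Int_H_subset:
  assumes "F1 face_of P" "v \<in> F1" "F1 \<noteq> {v}" "F2 face_of P" "F1 \<inter> H = F2 \<inter> H"
  shows "F1 \<subseteq> F2"
proof -
  have "F2 \<inter> rel_interior F1 \<noteq> {}"
    using rel_interior_face_meets_H[OF assms(1-3)] rel_interior_subset assms(5) by blast
  then show ?thesis
    using subset_of_face_of[OF assms(4) face_of_imp_subset[OF assms(1)]] by blast
qed

text \<open>A face \<open>P \<inter> H \<inter> {a\<bullet>x = e}\<close> of the slice lifts to the face of \<open>P\<close> cut out by the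
  tilted functional \<open>a + \<mu> c\<close>, with \<open>\<mu>\<close> chosen so that its level hyperplane passes through \<open>v\<close>.\<close>

lemma face_of_slice_lift:
  assumes "G face_of (P \<inter> H)" "G \<noteq> {}"
  obtains F where "F face_of P" "v \<in> F" "F \<noteq> {v}" "F \<inter> H = G"
proof -
  have "G exposed_face_of (P \<inter> H)"
    using exposed_face_of_polyhedron[OF polytope_imp_polyhedron[OF polytope_slice]] assms(1)
    by simp
  then obtain a e where ae: "P \<inter> H \<subseteq> {x. a \<bullet> x \<le> e}" "G = P \<inter> H \<inter> {x. a \<bullet> x = e}"
    unfolding exposed_face_of_def by blast
  define \<mu> where "\<mu> = (e - a \<bullet> v) / (c \<bullet> v - l)"
  define g where "g = a + \<mu> *\<^sub>R c"
  define \<kappa> where "\<kappa> = e + \<mu> * l"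
  have g: "g \<bullet> x = a \<bullet> x + \<mu> * (c \<bullet> x)" for x
    by (simp add: g_def inner_add_left)
  have gv: "g \<bullet> v = \<kappa>"
    using vertex_above by (simp add: g \<kappa>_def \<mu>_def field_simps)
  have "g \<bullet> y \<le> \<kappa>" if y: "y \<in> vertices P" for y
  proof (cases "y = v")
    case False
    then obtain p where p: "p \<in> open_segment v y" "p \<in> H"
      using open_segment_meets_H[OF y] by blast
    have "p \<in> P"
      using p(1) convex_P vertex_in y vertices_subset by (auto simp: convex_contains_open_segment)
    then have "g \<bullet> p \<le> g \<bullet> v"
      using ae(1) p(2) gv by (auto simp: g \<kappa>_def)
    then have "g \<bullet> y \<le> g \<bullet> v"
      using inner_open_segment(1)[OF p(1), of g] by blast
    then show ?thesis
      using gv by simp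
  qed (use gv in simp)
  then have gP: "\<forall>y\<in>P. g \<bullet> y \<le> \<kappa>"
    using polytope_le_iff_vertices[OF polytope_P] by blast
  define F where "F = P \<inter> {x. g \<bullet> x = \<kappa>}"
  have "F face_of P"
    unfolding F_def using gP convex_P by (intro face_of_Int_supporting_hyperplane_le) auto
  moreover have "F \<inter> H = G"
    using ae(2) by (auto simp: F_def g \<kappa>_def)
  moreover have "v \<in> F"
    using vertex_in gv by (simp add: F_def)
  ultimately show thesis
    using that assms(2) vertex_above by fastforce
qed

lemma below_vertex_iff_slice:
  assumes "F face_of P" "v \<in> F" "F \<noteq> {v}" "inj_on (\<lambda>x. b \<bullet> x) (vertices P)"
  shows "(\<forall>y\<in>F. b \<bullet> y \<le> b \<bullet> v) \<longleftrightarrow> (\<forall>p\<in>F \<inter> H. b \<bullet> p < b \<bullet> v)"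
proof
  assume le: "\<forall>y\<in>F. b \<bullet> y \<le> b \<bullet> v"
  show "\<forall>p\<in>F \<inter> H. b \<bullet> p < b \<bullet> v"
  proof
    fix p assume p: "p \<in> F \<inter> H"
    have "inj_on (\<lambda>x. b \<bullet> x) (vertices F)" "v \<in> vertices F"
      using inj_on_subset[OF assms(4)] vertices_face_of[OF assms(1)] vertex assms(2) by auto
    then have "F \<inter> {x. b \<bullet> x = b \<bullet> v} = {v}"
      using top_level_set_singleton[OF face_of_polytope_polytope[OF polytope_P assms(1)]] le
      by blast
    moreover have "p \<noteq> v"
      using p vertex_above by auto
    ultimately have "b \<bullet> p \<noteq> b \<bullet> v"
      using p by blast
    then show "b \<bullet> p < b \<bullet> v"
      using le p by force
  qed
next
  assume lt: "\<forall>p\<in>F \<inter> H. b \<bullet> p < b \<bullet> v"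
  have "b \<bullet> y \<le> b \<bullet> v" if y: "y \<in> vertices F" for y
  proof (cases "y = v")
    case False
    then obtain p where p: "p \<in> open_segment v y" "p \<in> H"
      using open_segment_meets_H y vertices_face_of[OF assms(1)] by blast
    have "p \<in> F"
      using p(1) face_of_imp_convex[OF assms(1)] assms(2) y vertices_subset
      by (auto simp: convex_contains_open_segment)
    then show ?thesis
      using lt p inner_open_segment(2)[OF p(1), of b] by force
  qed simp
  then show "\<forall>y\<in>F. b \<bullet> y \<le> b \<bullet> v"
    using polytope_le_iff_vertices[OF face_of_polytope_polytope[OF polytope_P assms(1)]] by blast
qed

lemma slice_below_vertex:
  assumes "\<exists>y\<in>P. b \<bullet> y < b \<bullet> v"
  shows "\<exists>p\<in>P \<inter> H. b \<bullet> p < b \<bullet> v"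
proof -
  obtain y where y: "y \<in> vertices P" "b \<bullet> y < b \<bullet> v"
    using polytope_ex_vertex_below[OF polytope_P assms] .
  moreover from y(2) have "y \<noteq> v"
    by auto
  ultimately obtain p where p: "p \<in> open_segment v y" "p \<in> H"
    using open_segment_meets_H by blast
  have "y \<in> P"
    using y(1) vertices_subset by blast
  then have "open_segment v y \<subseteq> P"
    using convex_P vertex_in by (simp add: convex_contains_open_segment)
  then show ?thesis
    using p inner_open_segment(2)[OF p(1), of b] y(2) by blast
qed

lemma bij_betw_faces_slice:
  assumes inj: "inj_on (\<lambda>x. b \<bullet> x) (vertices P)"
  shows "bij_betw (\<lambda>F. F \<inter> H)
           {F. F face_of P \<and> v \<in> F \<and> F \<noteq> {v} \<and> (\<forall>y\<in>F. b \<bullet> y \<le> b \<bullet> v)}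
           {G\<in>nonempty_faces (P \<inter> H). G \<subseteq> {x. b \<bullet> x < b \<bullet> v}}"
    (is "bij_betw _ ?S ?T")
proof -
  have "inj_on (\<lambda>F. F \<inter> H) ?S"
  proof (rule inj_onI)
    fix F1 F2 assume "F1 \<in> ?S" "F2 \<in> ?S" "F1 \<inter> H = F2 \<inter> H"
    then show "F1 = F2"
      using face_Int_H_subset[of F1 F2] face_Int_H_subset[of F2 F1] by auto
  qed
  moreover have "F \<inter> H \<in> ?T" if "F \<in> ?S" for F
  proof -
    from that have F: "F face_of P" "v \<in> F" "F \<noteq> {v}" "\<forall>y\<in>F. b \<bullet> y \<le> b \<bullet> v"
      by auto
    have "F \<inter> H face_of P \<inter> H"
      using F(1) by (rule face_of_slice) (rule convex_hyperplane)
    then show ?thesis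
      using face_meets_H[OF F(1-3)] below_vertex_iff_slice[OF F(1-3) inj] F(4)
      by (auto simp: nonempty_faces_def)
  qed
  moreover have "?T \<subseteq> (\<lambda>F. F \<inter> H) ` ?S"
  proof
    fix G assume G: "G \<in> ?T"
    then have "G face_of P \<inter> H" "G \<noteq> {}"
      by (auto simp: nonempty_faces_def)
    then obtain F where F: "F face_of P" "v \<in> F" "F \<noteq> {v}" "F \<inter> H = G"
      by (rule face_of_slice_lift)
    then have "\<forall>y\<in>F. b \<bullet> y \<le> b \<bullet> v"
      using below_vertex_iff_slice[OF F(1-3) inj] G by auto
    then show "G \<in> (\<lambda>F. F \<inter> H) ` ?S"
      using F by blast
  qed
  ultimately show ?thesis
    by (auto simp: bij_betw_def image_subset_iff)
qed

lemma sum_face_sign_below_vertex: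
  assumes inj: "inj_on (\<lambda>x. b \<bullet> x) (vertices P)"
    and slice_euler: "(\<exists>x\<in>P \<inter> H. b \<bullet> x < b \<bullet> v) \<Longrightarrow> euler_below (P \<inter> H) b (b \<bullet> v) = 1"
  shows "(\<Sum>F\<in>{F\<in>nonempty_faces P. v \<in> F \<and> (\<forall>y\<in>F. b \<bullet> y \<le> b \<bullet> v)}. face_sign F)
           = (if \<forall>y\<in>P. b \<bullet> v \<le> b \<bullet> y then 1 else 0)"
proof -
  define S where "S = {F. F face_of P \<and> v \<in> F \<and> F \<noteq> {v} \<and> (\<forall>y\<in>F. b \<bullet> y \<le> b \<bullet> v)}"
  have "{v} face_of P"
    using vertex by (simp add: face_of_singleton vertices_def)
  then have split: "{F\<in>nonempty_faces P. v \<in> F \<and> (\<forall>y\<in>F. b \<bullet> y \<le> b \<bullet> v)} = insert {v} S"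
    by (auto simp: nonempty_faces_def S_def)
  have "finite S"
    using finite_polytope_faces[OF polytope_P] by (rule finite_subset[rotated]) (auto simp: S_def)
  moreover have "{v} \<notin> S"
    by (simp add: S_def)
  moreover have "(\<Sum>F\<in>S. face_sign F) = - euler_below (P \<inter> H) b (b \<bullet> v)"
  proof -
    have "(\<Sum>F\<in>S. face_sign F) = (\<Sum>F\<in>S. - face_sign (F \<inter> H))"
      using face_sign_Int_H by (intro sum.cong) (auto simp: S_def)
    also have "\<dots> = - euler_below (P \<inter> H) b (b \<bullet> v)"
      using sum.reindex_bij_betw[OF bij_betw_faces_slice[OF inj], of "\<lambda>G. - face_sign G"]
      by (simp add: S_def euler_below_def sum_negf)
    finally show ?thesis .
  qed
  moreover have "euler_below (P \<inter> H) b (b \<bullet> v) = (if \<exists>x\<in>P \<inter> H. b \<bullet> x < b \<bullet> v then 1 else 0)"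
  proof (cases "\<exists>x\<in>P \<inter> H. b \<bullet> x < b \<bullet> v")
    case False
    then have empty: "{G\<in>nonempty_faces (P \<inter> H). G \<subseteq> {x. b \<bullet> x < b \<bullet> v}} = {}"
      by (force simp: nonempty_faces_def dest: face_of_imp_subset)
    show ?thesis
      unfolding euler_below_def empty using False by simp
  qed (use slice_euler in simp)
  moreover have "(\<exists>x\<in>P \<inter> H. b \<bullet> x < b \<bullet> v) \<longleftrightarrow> \<not> (\<forall>y\<in>P. b \<bullet> v \<le> b \<bullet> y)"
    using slice_below_vertex by force
  ultimately show ?thesis
    unfolding split by simp
qed

end

lemma vertex_strictly_exposed:
  fixes P :: "'a::euclidean_space set"
  assumes P: "polytope P" and v: "v \<in> vertices P"
  obtains c where "\<And>y. y \<in> vertices P \<Longrightarrow> y \<noteq> v \<Longrightarrow> c \<bullet> y < c \<bullet> v"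
proof -
  have "{v} face_of P"
    using v by (simp add: face_of_singleton vertices_def)
  then have "{v} exposed_face_of P"
    using exposed_face_of_polyhedron[OF polytope_imp_polyhedron[OF P]] by simp
  then obtain c d where cd: "P \<subseteq> {x. c \<bullet> x \<le> d}" "{v} = P \<inter> {x. c \<bullet> x = d}"
    unfolding exposed_face_of_def by blast
  have "c \<bullet> y < c \<bullet> v" if "y \<in> vertices P" "y \<noteq> v" for y
  proof -
    have "y \<in> P"
      using that(1) vertices_subset by blast
    then have "c \<bullet> y \<le> d" "c \<bullet> y \<noteq> d"
      using cd that(2) by auto
    moreover have "c \<bullet> v = d"
      using cd(2) by blast
    ultimately show ?thesis
      by simp
  qed
  then show thesis
    using that by blast
qed

lemma vertex_figure_exists:
  fixes P :: "'a::euclidean_space set"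
  assumes P: "polytope P" and v: "v \<in> vertices P" and nontrivial: "P \<noteq> {v}"
  obtains c l where "vertex_figure P v c l"
proof -
  obtain c where c: "\<And>y. y \<in> vertices P \<Longrightarrow> y \<noteq> v \<Longrightarrow> c \<bullet> y < c \<bullet> v"
    using vertex_strictly_exposed[OF P v] by blast
  have "vertices P - {v} \<noteq> {}"
  proof
    assume "vertices P - {v} = {}"
    then have "vertices P = {v}"
      using v by blast
    then show False
      using convex_hull_vertices[OF P] nontrivial by simp
  qed
  then obtain w where w: "w \<in> vertices P - {v}" "\<forall>y\<in>vertices P - {v}. c \<bullet> y \<le> c \<bullet> w"
    using finite_ex_max[of "vertices P - {v}"] finite_vertices[OF P] by blast
  have "c \<bullet> w < c \<bullet> v"
    using c w(1) by blast
  have "vertex_figure P v c ((c \<bullet> w + c \<bullet> v) / 2)"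
  proof
    show "c \<bullet> y < (c \<bullet> w + c \<bullet> v) / 2" if "y \<in> vertices P" "y \<noteq> v" for y
    proof -
      have "c \<bullet> y \<le> c \<bullet> w"
        using w(2) that by blast
      then show ?thesis
        using \<open>c \<bullet> w < c \<bullet> v\<close> by (simp add: field_simps)
    qed
    show "(c \<bullet> w + c \<bullet> v) / 2 < c \<bullet> v"
      using \<open>c \<bullet> w < c \<bullet> v\<close> by simp
  qed (use P v in auto)
  then show thesis
    using that by blast
qed


section \<open>The Euler relation for faces in a halfspace\<close>

lemma sum_face_sign_top_vertex:
  fixes P :: "'a::euclidean_space set"
  assumes P: "polytope P" and inj: "inj_on (\<lambda>x. b \<bullet> x) (vertices P)" and v: "v \<in> vertices P"
    and lower: "\<And>(Q::'a set) a t. polytope Q \<Longrightarrow> aff_dim Q < aff_dim P \<Longrightarrow> \<exists>x\<in>Q. a \<bullet> x < t \<Longrightarrow>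
                  euler_below Q a t = 1"
  shows "(\<Sum>F\<in>{F\<in>nonempty_faces P. top_vertex b F = v}. face_sign F)
           = (if \<forall>y\<in>P. b \<bullet> v \<le> b \<bullet> y then 1 else 0)"
proof -
  have "{F\<in>nonempty_faces P. top_vertex b F = v}
      = {F\<in>nonempty_faces P. v \<in> F \<and> (\<forall>y\<in>F. b \<bullet> y \<le> b \<bullet> v)}"
    using top_vertex_eq_iff[OF P inj _ v] by blast
  moreover have "(\<Sum>F\<in>{F\<in>nonempty_faces P. v \<in> F \<and> (\<forall>y\<in>F. b \<bullet> y \<le> b \<bullet> v)}. face_sign F)
      = (if \<forall>y\<in>P. b \<bullet> v \<le> b \<bullet> y then 1 else 0)"
  proof (cases "P = {v}")
    case True
    then have "{F\<in>nonempty_faces P. v \<in> F \<and> (\<forall>y\<in>F. b \<bullet> y \<le> b \<bullet> v)} = {{v}}"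
      by (auto simp: nonempty_faces_def face_of_refl dest: face_of_imp_subset)
    then show ?thesis
      using True by simp
  next
    case False
    then obtain c l where "vertex_figure P v c l"
      using vertex_figure_exists[OF P v] by blast
    then interpret vertex_figure P v c l .
    have "(\<exists>x\<in>P \<inter> H. b \<bullet> x < b \<bullet> v) \<Longrightarrow> euler_below (P \<inter> H) b (b \<bullet> v) = 1"
      using polytope_slice aff_dim_slice_less[OF False] by (rule lower)
    then show ?thesis
      by (rule sum_face_sign_below_vertex[OF inj])
  qed
  ultimately show ?thesis
    by simp
qed

lemma euler_below_generic:
  fixes P :: "'a::euclidean_space set"
  assumes P: "polytope P" and inj: "inj_on (\<lambda>x. b \<bullet> x) (vertices P)"
    and lower: "\<And>(Q::'a set) a t. polytope Q \<Longrightarrow> aff_dim Q < aff_dim P \<Longrightarrow> \<exists>x\<in>Q. a \<bullet> x < t \<Longrightarrow>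
                  euler_below Q a t = 1"
    and below: "\<exists>x\<in>P. b \<bullet> x < t"
  shows "euler_below P b t = 1"
proof -
  have ne: "P \<noteq> {}"
    using below by blast
  have top_below: "F \<subseteq> {x. b \<bullet> x < t} \<longleftrightarrow> b \<bullet> top_vertex b F < t"
    if "F \<in> nonempty_faces P" for F
    using that polytope_nonempty_face[OF P] by (intro subset_halfspace_iff_top_vertex) (auto simp: nonempty_faces_def)
  have "euler_below P b t = (\<Sum>F\<in>nonempty_faces P. if F \<subseteq> {x. b \<bullet> x < t} then face_sign F else 0)"
    unfolding euler_below_def using finite_nonempty_faces[OF P] by (rule sum.inter_filter)
  also have "\<dots>
      = (\<Sum>F\<in>nonempty_faces P. of_int (face_sign F) * (if b \<bullet> top_vertex b F < t then 1 else 0))"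
    using top_below by (intro sum.cong) auto
  also have "\<dots> = (if b \<bullet> top_vertex (-b) P < t then 1 else 0)"
    using sum_faces_by_top_vertex[OF P ne inj sum_face_sign_top_vertex[OF P inj _ lower],
        where g = "\<lambda>v. if b \<bullet> v < t then 1 else 0 :: int"]
    by simp
  also have "\<dots> = 1"
  proof -
    obtain x where "x \<in> P" "b \<bullet> x < t"
      using below by blast
    moreover have "(-b) \<bullet> x \<le> (-b) \<bullet> top_vertex (-b) P"
      using top_vertex(2)[OF P ne, of "-b"] \<open>x \<in> P\<close> by blast
    ultimately show ?thesis
      by simp
  qed
  finally show ?thesis .
qed

lemma euler_below_perturb:
  fixes P :: "'a::euclidean_space set"
  assumes P: "polytope P" and below: "\<exists>x\<in>P. a \<bullet> x < t"
  obtains b t' where "inj_on (\<lambda>x. b \<bullet> x) (vertices P)" "\<exists>x\<in>P. b \<bullet> x < t'"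
    "euler_below P a t = euler_below P b t'"
proof -
  obtain b t' where inj: "inj_on (\<lambda>x. b \<bullet> x) (vertices P)"
    and same_side: "\<And>x. x \<in> vertices P \<Longrightarrow> a \<bullet> x < t \<longleftrightarrow> b \<bullet> x < t'"
    using generic_direction_halfspace[OF finite_vertices[OF P]] by metis
  have "F \<subseteq> {x. a \<bullet> x < t} \<longleftrightarrow> F \<subseteq> {x. b \<bullet> x < t'}" if F: "F \<in> nonempty_faces P" for F
    using F vertices_face_of same_side
    by (intro polytope_subset_halfspace_iff polytope_nonempty_face[OF P]) (auto simp: nonempty_faces_def)
  then have "{F\<in>nonempty_faces P. F \<subseteq> {x. a \<bullet> x < t}} = {F\<in>nonempty_faces P. F \<subseteq> {x. b \<bullet> x < t'}}"
    by blast
  then have "euler_below P a t = euler_below P b t'"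
    by (simp add: euler_below_def)
  moreover obtain x where "x \<in> vertices P" "a \<bullet> x < t"
    using polytope_ex_vertex_below[OF P below] .
  then have "x \<in> P" "b \<bullet> x < t'"
    using same_side vertices_subset by auto
  ultimately show thesis
    using that inj by blast
qed

lemma euler_below_eq_1:
  fixes P :: "'a::euclidean_space set"
  assumes "polytope P" "\<exists>x\<in>P. a \<bullet> x < t"
  shows "euler_below P a t = 1"
  using assms
proof (induction "nat (aff_dim P + 1)" arbitrary: P a t rule: less_induct)
  case less
  obtain b t' where b: "inj_on (\<lambda>x. b \<bullet> x) (vertices P)" "\<exists>x\<in>P. b \<bullet> x < t'"
    "euler_below P a t = euler_below P b t'"
    using euler_below_perturb[OF less.prems] by blast
  have "euler_below Q a t = 1"
    if "polytope Q" "aff_dim Q < aff_dim P" "\<exists>x\<in>Q. a \<bullet> x < t" for Q :: "'a set" and a t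
  proof -
    have "nat (aff_dim Q + 1) < nat (aff_dim P + 1)"
      using that(2) aff_dim_geq[of Q] by linarith
    then show ?thesis
      using less.hyps that(1,3) by blast
  qed
  then show ?case
    using euler_below_generic[OF less.prems(1) b(1) _ b(2)] b(3) by simp
qed


section \<open>Minkowski sums and support functions\<close>

lemma ne_polytope_iff: "ne_polytope P \<longleftrightarrow> polytope P \<and> P \<noteq> {}"
  unfolding ne_polytope_def polytope_def by auto

lemma ne_polytope_zero: "ne_polytope (0::'a::euclidean_space set)"
  unfolding ne_polytope_def by (intro exI[of _ "{0}"]) simp

lemma ne_polytope_plus:
  assumes "ne_polytope A" "ne_polytope B"
  shows "ne_polytope (A + B)"
proof -
  obtain S T where "finite S" "S \<noteq> {}" "A = convex hull S" "finite T" "T \<noteq> {}" "B = convex hull T"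
    using assms unfolding ne_polytope_def by blast
  moreover have "S + T \<noteq> {}"
    using \<open>S \<noteq> {}\<close> \<open>T \<noteq> {}\<close> by (auto simp: set_plus_def)
  ultimately show ?thesis
    unfolding ne_polytope_def
    by (intro exI[of _ "S + T"]) (simp add: finite_set_plus convex_hull_set_plus)
qed

lemma ne_polytope_sum:
  fixes f :: "'b \<Rightarrow> 'a::euclidean_space set"
  shows "finite S \<Longrightarrow> (\<And>F. F \<in> S \<Longrightarrow> ne_polytope (f F)) \<Longrightarrow> ne_polytope (\<Sum>F\<in>S. f F)"
  by (induction S rule: finite_induct) (auto simp: ne_polytope_zero ne_polytope_plus simp del: set_zero)

lemma ne_polytope_refl_poly:
  assumes "ne_polytope P"
  shows "ne_polytope (refl_poly P)"
proof -
  obtain S where S: "finite S" "S \<noteq> {}" "P = convex hull S"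
    using assms ne_polytope_def by blast
  have "refl_poly P = convex hull (uminus ` S)"
    unfolding refl_poly_def S(3) by (rule convex_hull_linear_image) (simp add: linear_iff)
  then show ?thesis
    using S unfolding ne_polytope_def by blast
qed

lemma finite_faces:
  fixes P :: "'a::euclidean_space set"
  assumes "polytope P" "P \<noteq> {}"
  shows "finite (faces P)"
  using finite_nonempty_faces[OF assms(1)] faces_eq_nonempty_faces[OF assms] by simp

lemma ne_polytope_face:
  fixes P :: "'a::euclidean_space set"
  assumes "ne_polytope P" "F \<in> faces P"
  shows "ne_polytope F"
proof -
  have P: "polytope P" "P \<noteq> {}"
    using assms(1) ne_polytope_iff by auto
  then have "F \<in> nonempty_faces P"
    using assms(2) faces_eq_nonempty_faces by blast
  then show ?thesis
    using polytope_nonempty_face[OF P(1)] by (simp add: ne_polytope_iff nonempty_faces_def)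
qed

lemma ne_polytope_sum_faces:
  fixes P :: "'a::euclidean_space set"
  assumes "ne_polytope P"
  shows "ne_polytope (\<Sum>F\<in>{F\<in>faces P. Q F}. F)"
proof (rule ne_polytope_sum)
  have "finite (faces P)"
    using assms by (auto simp: ne_polytope_iff intro: finite_faces)
  then show "finite {F\<in>faces P. Q F}"
    by simp
qed (use ne_polytope_face[OF assms] in blast)

lemma support_fun_attained:
  assumes "ne_polytope A"
  obtains x where "x \<in> A" "\<forall>y\<in>A. a \<bullet> y \<le> a \<bullet> x" "support_fun A a = a \<bullet> x"
proof -
  obtain x where "x \<in> vertices A" "\<forall>y\<in>A. a \<bullet> y \<le> a \<bullet> x"
    using polytope_max_at_vertex assms ne_polytope_iff by metis
  then show thesis
    using that support_fun_eq_max vertices_subset by blast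
qed

lemma support_fun_plus:
  assumes "ne_polytope A" "ne_polytope B"
  shows "support_fun (A + B) a = support_fun A a + support_fun B a"
proof -
  obtain x where x: "x \<in> A" "\<forall>y\<in>A. a \<bullet> y \<le> a \<bullet> x" "support_fun A a = a \<bullet> x"
    using support_fun_attained[OF assms(1)] .
  obtain z where z: "z \<in> B" "\<forall>y\<in>B. a \<bullet> y \<le> a \<bullet> z" "support_fun B a = a \<bullet> z"
    using support_fun_attained[OF assms(2)] .
  have "\<forall>y\<in>A + B. a \<bullet> y \<le> a \<bullet> (x + z)"
    using x(2) z(2) by (auto simp: set_plus_def inner_add_right add_mono)
  then have "support_fun (A + B) a = a \<bullet> (x + z)"
    using x(1) z(1) by (intro support_fun_eq_max) (auto simp: set_plus_def)
  then show ?thesis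
    using x(3) z(3) by (simp add: inner_add_right)
qed

lemma support_fun_sum:
  fixes f :: "'b \<Rightarrow> 'a::euclidean_space set"
  shows "finite S \<Longrightarrow> (\<And>F. F \<in> S \<Longrightarrow> ne_polytope (f F)) \<Longrightarrow>
    support_fun (\<Sum>F\<in>S. f F) a = (\<Sum>F\<in>S. support_fun (f F) a)"
proof (induction S rule: finite_induct)
  case empty
  then show ?case
    by (simp add: support_fun_def)
next
  case (insert F S)
  then show ?case
    by (simp add: support_fun_plus ne_polytope_sum)
qed

lemma support_fun_refl_poly: "support_fun (refl_poly P) a = support_fun P (-a)"
  unfolding support_fun_def refl_poly_def by (simp add: image_image)

lemma ne_polytope_eq_by_support_fun:
  fixes A B :: "'a::euclidean_space set"
  assumes A: "ne_polytope A" and B: "ne_polytope B" and eq: "\<And>a. support_fun A a = support_fun B a"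
  shows "A = B"
proof -
  have "X \<subseteq> Y" if X: "ne_polytope X" and Y: "ne_polytope Y"
    and eq: "\<And>a. support_fun X a = support_fun Y a" for X Y :: "'a set"
  proof
    fix x assume "x \<in> X"
    show "x \<in> Y"
    proof (rule ccontr)
      assume "x \<notin> Y"
      have "polytope Y"
        using Y ne_polytope_iff by blast
      then obtain a c where ac: "a \<bullet> x < c" "\<forall>y\<in>Y. c < a \<bullet> y"
        using separating_hyperplane_closed_point polytope_imp_convex polytope_imp_closed \<open>x \<notin> Y\<close>
        by metis
      obtain z where "z \<in> Y" "support_fun Y (-a) = (-a) \<bullet> z"
        using support_fun_attained[OF Y] by blast
      moreover obtain u where "support_fun X (-a) = (-a) \<bullet> u" "\<forall>y\<in>X. (-a) \<bullet> y \<le> (-a) \<bullet> u"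
        using support_fun_attained[OF X] by blast
      ultimately have "(-a) \<bullet> x \<le> (-a) \<bullet> z"
        using eq \<open>x \<in> X\<close> by metis
      then show False
        using ac \<open>z \<in> Y\<close> by auto
    qed
  qed
  then show ?thesis
    using A B eq by (metis subset_antisym)
qed

lemma sum_face_sign_support_fun:
  fixes P :: "'a::euclidean_space set"
  assumes P: "polytope P" "P \<noteq> {}"
  shows "(\<Sum>F\<in>nonempty_faces P. of_int (face_sign F) * support_fun F a) = - support_fun (refl_poly P) a"
proof -
  obtain b where inj: "inj_on (\<lambda>x. b \<bullet> x) (vertices P)"
    and refines: "\<And>x y. x \<in> vertices P \<Longrightarrow> y \<in> vertices P \<Longrightarrow> a \<bullet> x < a \<bullet> y \<Longrightarrow> b \<bullet> x < b \<bullet> y"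
    and "\<And>x. x \<in> vertices P \<Longrightarrow> \<bar>b \<bullet> x - a \<bullet> x\<bar> < 1"
    by (fact generic_direction[OF finite_vertices[OF P(1)] zero_less_one])
  have "support_fun F a = a \<bullet> top_vertex b F" if F: "F \<in> nonempty_faces P" for F
  proof (rule support_fun_top_vertex)
    show "polytope F"
      using polytope_nonempty_face[OF P(1) F] .
    have F': "F face_of P" "F \<noteq> {}"
      using F by (auto simp: nonempty_faces_def)
    then show "F \<noteq> {}"
      by simp
    show "\<And>x y. x \<in> vertices F \<Longrightarrow> y \<in> vertices F \<Longrightarrow> a \<bullet> x < a \<bullet> y \<Longrightarrow> b \<bullet> x < b \<bullet> y"
      using refines vertices_face_of[OF F'(1)] by blast
  qed
  then have "(\<Sum>F\<in>nonempty_faces P. of_int (face_sign F) * support_fun F a)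
      = (\<Sum>F\<in>nonempty_faces P. of_int (face_sign F) * (a \<bullet> top_vertex b F))"
    by (intro sum.cong) auto
  also have "\<dots> = a \<bullet> top_vertex (-b) P"
  proof (rule sum_faces_by_top_vertex[OF P inj, where g = "\<lambda>v. a \<bullet> v"])
    fix v assume "v \<in> vertices P"
    then show "(\<Sum>F\<in>{F\<in>nonempty_faces P. top_vertex b F = v}. face_sign F)
        = (if \<forall>y\<in>P. b \<bullet> v \<le> b \<bullet> y then 1 else 0)"
      by (rule sum_face_sign_top_vertex[OF P(1) inj]) (rule euler_below_eq_1)
  qed
  also have "\<dots> = - support_fun P (-a)"
  proof -
    have "support_fun P (-a) = (-a) \<bullet> top_vertex (-b) P"
      by (rule support_fun_top_vertex[OF P]) (use refines in auto)
    then show ?thesis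
      by simp
  qed
  finally show ?thesis
    by (simp add: support_fun_refl_poly)
qed


section \<open>The reflection formula\<close>

lemma refl_poly_plus_even_faces:
  fixes P :: "'a::euclidean_space set"
  assumes P: "ne_polytope P"
  shows "refl_poly P + (\<Sum>F\<in>{F\<in>faces P. even (nat (aff_dim F))}. F)
           = (\<Sum>F\<in>{F\<in>faces P. odd (nat (aff_dim F))}. F)"
    (is "refl_poly P + ?E = ?O")
proof (rule ne_polytope_eq_by_support_fun)
  have P': "polytope P" "P \<noteq> {}"
    using P ne_polytope_iff by auto
  have fin: "finite {F\<in>faces P. Q F}" for Q
    using finite_faces[OF P'] by simp
  have sum_class: "support_fun (\<Sum>F\<in>{F\<in>faces P. Q F}. F) a
      = (\<Sum>F\<in>faces P. if Q F then support_fun F a else 0)" for Q a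
  proof -
    have "support_fun (\<Sum>F\<in>{F\<in>faces P. Q F}. F) a = (\<Sum>F\<in>{F\<in>faces P. Q F}. support_fun F a)"
      using fin ne_polytope_face[OF P] by (intro support_fun_sum) auto
    also have "\<dots> = (\<Sum>F\<in>faces P. if Q F then support_fun F a else 0)"
      using finite_faces[OF P'] by (rule sum.inter_filter)
    finally show ?thesis .
  qed
  show "ne_polytope (refl_poly P + ?E)"
    using P by (intro ne_polytope_plus ne_polytope_refl_poly ne_polytope_sum_faces)
  show "ne_polytope ?O"
    using P by (rule ne_polytope_sum_faces)
  fix a
  have "support_fun ?E a - support_fun ?O a
      = (\<Sum>F\<in>faces P. (if even (nat (aff_dim F)) then support_fun F a else 0)
                         - (if odd (nat (aff_dim F)) then support_fun F a else 0))"
    unfolding sum_class by (simp add: sum_subtractf)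
  also have "\<dots> = (\<Sum>F\<in>faces P. of_int (face_sign F) * support_fun F a)"
    by (intro sum.cong) (auto simp: face_sign_eq)
  also have "\<dots> = - support_fun (refl_poly P) a"
    using sum_face_sign_support_fun[OF P'] faces_eq_nonempty_faces[OF P'] by simp
  finally show "support_fun (refl_poly P + ?E) a = support_fun ?O a"
    using support_fun_plus[OF ne_polytope_refl_poly[OF P] ne_polytope_sum_faces[OF P]] by simp
qed

lemma sum_zmul_sign_pcls:
  fixes S :: "'a::euclidean_space set set"
  assumes "finite S"
  shows "(\<Sum>F\<in>S. zmul ((-1) ^ nat (aff_dim F)) (pcls F))
           = (\<Sum>F\<in>{F\<in>S. even (nat (aff_dim F))}. F, \<Sum>F\<in>{F\<in>S. odd (nat (aff_dim F))}. F)"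
proof -
  have "zmul ((-1) ^ nat (aff_dim F)) (pcls F)
      = (if even (nat (aff_dim F)) then F else 0, if odd (nat (aff_dim F)) then F else 0)"
    for F :: "'a set"
    by (cases "even (nat (aff_dim F))") (simp_all add: zmul_def pcls_def gneg_def)
  then show ?thesis
    using assms by (simp add: prod_eq_iff fst_sum snd_sum sum.inter_filter)
qed

theorem theorem5p2:
  fixes P :: "'a::euclidean_space set"
  assumes "ne_polytope P"
  shows "groth_eq (pcls (refl_poly P))
           (gneg (\<Sum>F\<in>faces P. zmul ((-1) ^ nat (aff_dim F)) (pcls F)))"
proof -
  let ?E = "\<Sum>F\<in>{F\<in>faces P. even (nat (aff_dim F))}. F"
  let ?O = "\<Sum>F\<in>{F\<in>faces P. odd (nat (aff_dim F))}. F"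
  have P: "polytope P" "P \<noteq> {}"
    using assms ne_polytope_iff by auto
  have "finite (faces P)"
    using P by (rule finite_faces)
  then have "(\<Sum>F\<in>faces P. zmul ((-1) ^ nat (aff_dim F)) (pcls F)) = (?E, ?O)"
    by (rule sum_zmul_sign_pcls)
  moreover have "refl_poly P + ?E = ?O"
    using assms by (rule refl_poly_plus_even_faces)
  moreover have "ne_polytope ?E" "ne_polytope ?O"
    using assms by (rule ne_polytope_sum_faces)+
  ultimately show ?thesis
    using ne_polytope_refl_poly[OF assms] ne_polytope_zero
    by (auto simp: groth_eq_def pcls_def gneg_def simp del: set_zero intro!: exI[of _ 0])
qed

end
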